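(* Let $n\ge2$ and $\mathcal{P}=\{x\in\mathbb{R}^n:\tfrac12(\max_i x_i-\min_i x_i)\le1\}$. The lattice of double-faces of $\mathcal{P}$ has the Sperner property, i.e., the maximum size of an antichain in it equals the maximum size of a rank level. Moreover, the set of all double-faces of $\mathcal{P}$ of dimension $\lfloor n/3\rfloor+1$ is an antichain of maximum size.
   Context: For a polyhedron $\mathcal{Q}$, a face is $\mathcal{Q}$, $\varnothing$, or a nonempty set $\mathcal{Q}\cap\{x:b^\top x=c\}$ where $b^\top x\le c$ for all $x\in\mathcal{Q}$; its dimension is that of its affine hull; a proper face is a face other than $\mathcal{Q}$ and $\varnothing$. For centrally symmetric $\mathcal{Q}$ ($\mathcal{Q}=-\mathcal{Q}$), a double-face is a set $F\cup -F$ with $F$ a proper face, and its dimension/rank is the dimension of $F$. The lattice of double-faces is the set of all double-faces together with $\mathcal{Q}$ (rank $n$) and $\varnothing$ (rank one less than the smallest dimension of a proper face), partially ordered by inclusion; it is graded by this rank, and a rank level is the set of all its elements of a given rank. An antichain is a set of pairwise incomparable elements. *)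

theory Defs
  imports "HOL-Analysis.Analysis"
begin

definition poly_face :: "'a::euclidean_space set \<Rightarrow> 'a set \<Rightarrow> bool" where
  "poly_face Q F \<longleftrightarrow> F = Q \<or> F = {} \<or>
     (\<exists>b c. (\<forall>x\<in>Q. inner b x \<le> c) \<and> F = Q \<inter> {x. inner b x = c} \<and> F \<noteq> {})"

definition proper_face :: "'a::euclidean_space set \<Rightarrow> 'a set \<Rightarrow> bool" where
  "proper_face Q F \<longleftrightarrow> poly_face Q F \<and> F \<noteq> Q \<and> F \<noteq> {}"

text \<open>Double-faces F \<union> -F (pointwise negation, not complement).\<close>
definition double_face :: "'a::euclidean_space set \<Rightarrow> 'a set \<Rightarrow> bool" where
  "double_face Q D \<longleftrightarrow> (\<exists>F. proper_face Q F \<and> D = F \<union> uminus ` F)"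

definition double_faces_of_dim :: "'a::euclidean_space set \<Rightarrow> int \<Rightarrow> 'a set set" where
  "double_faces_of_dim Q k = {D. \<exists>F. proper_face Q F \<and> aff_dim F = k \<and> D = F \<union> uminus ` F}"

definition df_lattice :: "'a::euclidean_space set \<Rightarrow> 'a set set" where
  "df_lattice Q = {D. double_face Q D} \<union> {Q, {}}"

definition df_rank :: "'a::euclidean_space set \<Rightarrow> 'a set \<Rightarrow> int" where
  "df_rank Q D =
     (if D = Q then int DIM('a)
      else if D = {} then Min {aff_dim F | F. proper_face Q F} - 1
      else aff_dim (SOME F. proper_face Q F \<and> D = F \<union> uminus ` F))"

definition rank_level :: "'a::euclidean_space set \<Rightarrow> int \<Rightarrow> 'a set set" where
  "rank_level Q k = {D \<in> df_lattice Q. df_rank Q D = k}"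

definition df_antichain :: "'a::euclidean_space set \<Rightarrow> 'a set set \<Rightarrow> bool" where
  "df_antichain Q A \<longleftrightarrow> A \<subseteq> df_lattice Q \<and>
     (\<forall>X\<in>A. \<forall>Y\<in>A. X \<noteq> Y \<longrightarrow> \<not> X \<subseteq> Y)"

definition Pspread :: "(real ^ 'n) set" where
  "Pspread = {x. (Max (range (\<lambda>i. x $ i)) - Min (range (\<lambda>i. x $ i))) / 2 \<le> 1}"

end

theory Submission
  imports Defs "HOL-Library.Product_Order"
begin

text \<open>A proper face of P is determined by the pair (S, T) of disjoint nonempty sets of coordinates
  that are maximal resp. minimal with spread 2 on it; it has dimension n + 1 - |S| - |T|, and its
  negative is the face of (T, S). Inclusion of double-faces is reverse componentwise inclusion of
  pairs up to swapping, and every double-face comes from exactly two pairs, so an antichain of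
  double-faces pulls back to an antichain of twice its size among the pairs, ranked by |S| + |T|.
  A pair of rank j has 2 (n - j) upper covers and at most j + 1 lower covers, and for j \<ge> 3 at least
  j - 1 lower covers. By double counting, the levels below m = n - \<lfloor>n/3\<rfloor> expand upwards and those
  above expand downwards, so replacing the lowest or highest level of an antichain by its shadow
  towards m never makes it smaller: level m, i.e. the double-faces of dimension \<lfloor>n/3\<rfloor> + 1, is a
  largest antichain.\<close>

section \<open>Antichains in ranked orders\<close>

lemma card_le_card_neighbours:
  fixes R :: "'a \<Rightarrow> 'b \<Rightarrow> bool"
  assumes "finite Y" "0 < a" "b \<le> a"
    and deg_X: "\<And>x. x \<in> X \<Longrightarrow> a \<le> card {y \<in> Y. R x y}"
    and deg_Y: "\<And>y. y \<in> Y \<Longrightarrow> card {x \<in> X. R x y} \<le> b"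
  shows "card X \<le> card {y \<in> Y. \<exists>x\<in>X. R x y}"
proof (cases "finite X")
  case True
  define N where "N = {y \<in> Y. \<exists>x\<in>X. R x y}"
  have "finite N" using \<open>finite Y\<close> by (simp add: N_def)
  have "a * card X = (\<Sum>x\<in>X. a)" by simp
  also have "\<dots> \<le> (\<Sum>x\<in>X. card {y \<in> N. R x y})"
  proof (rule sum_mono)
    fix x assume "x \<in> X"
    then have "{y \<in> N. R x y} = {y \<in> Y. R x y}" by (auto simp: N_def)
    then show "a \<le> card {y \<in> N. R x y}" using deg_X[OF \<open>x \<in> X\<close>] by simp
  qed
  also have "\<dots> = (\<Sum>y\<in>N. card {x \<in> X. R x y})"
    unfolding card_eq_sum by (rule sum.swap_restrict[OF True \<open>finite N\<close>])
  also have "\<dots> \<le> (\<Sum>y\<in>N. b)"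
    by (rule sum_mono) (use deg_Y in \<open>auto simp: N_def\<close>)
  also have "\<dots> \<le> a * card N" using \<open>b \<le> a\<close> by simp
  finally show ?thesis using \<open>0 < a\<close> by (simp add: N_def)
qed simp

definition is_antichain :: "('a \<Rightarrow> 'a \<Rightarrow> bool) \<Rightarrow> 'a set \<Rightarrow> bool" where
  "is_antichain le B \<longleftrightarrow> (\<forall>x\<in>B. \<forall>y\<in>B. x \<noteq> y \<longrightarrow> \<not> le x y)"

lemma is_antichain_converse: "is_antichain (\<lambda>x y. le y x) B \<longleftrightarrow> is_antichain le B"
  unfolding is_antichain_def by auto

locale ranked_order =
  fixes V :: "'a set" and le :: "'a \<Rightarrow> 'a \<Rightarrow> bool" and rank :: "'a \<Rightarrow> int"
  assumes finite_V: "finite V"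
    and le_trans: "\<lbrakk>x \<in> V; y \<in> V; z \<in> V; le x y; le y z\<rbrakk> \<Longrightarrow> le x z"
    and rank_less: "\<lbrakk>x \<in> V; y \<in> V; le x y; x \<noteq> y\<rbrakk> \<Longrightarrow> rank x < rank y"
begin

definition level :: "int \<Rightarrow> 'a set" where
  "level j = {x \<in> V. rank x = j}"

definition upper_shadow :: "'a set \<Rightarrow> 'a set" where
  "upper_shadow X = {y \<in> V. \<exists>x\<in>X. le x y \<and> rank y = rank x + 1}"

definition lower_shadow :: "'a set \<Rightarrow> 'a set" where
  "lower_shadow X = {y \<in> V. \<exists>x\<in>X. le y x \<and> rank y + 1 = rank x}"

lemma is_antichain_replace_bottom_level:
  assumes BV: "B \<subseteq> V" and B: "is_antichain le B" and above: "\<forall>b\<in>B. j \<le> rank b"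
    and X: "X = {b \<in> B. rank b = j}"
  shows "is_antichain le ((B - X) \<union> upper_shadow X)"
  unfolding is_antichain_def
proof (intro ballI impI notI)
  have U: "y \<in> V" "rank y = j + 1" "\<exists>x\<in>X. le x y" if "y \<in> upper_shadow X" for y
    using that X by (auto simp: upper_shadow_def)
  fix x y assume x: "x \<in> (B - X) \<union> upper_shadow X" and y: "y \<in> (B - X) \<union> upper_shadow X"
    and "x \<noteq> y" "le x y"
  have "x \<in> V" "y \<in> V" using x y BV U(1) by blast+
  then have less: "rank x < rank y" using rank_less \<open>le x y\<close> \<open>x \<noteq> y\<close> by blast
  consider "x \<in> B - X" "y \<in> B - X" | "y \<in> upper_shadow X" | "x \<in> upper_shadow X" "y \<in> B - X"
    using x y by blast
  then show False
  proof cases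
    case 1
    then show ?thesis using B \<open>x \<noteq> y\<close> \<open>le x y\<close> by (auto simp: is_antichain_def)
  next
    case 2
    have "rank x \<ge> j + 1" using x above U(2) X by fastforce
    then show ?thesis using less U(2)[OF 2] by linarith
  next
    case 3
    obtain z where "z \<in> X" "le z x" using U(3)[OF 3(1)] by blast
    then have z: "z \<in> B" "z \<in> V" using BV X by auto
    then have "le z y" using le_trans \<open>x \<in> V\<close> \<open>y \<in> V\<close> \<open>le z x\<close> \<open>le x y\<close> by blast
    moreover have "z \<noteq> y" using \<open>z \<in> X\<close> 3(2) by blast
    ultimately show ?thesis using B z(1) 3(2) by (auto simp: is_antichain_def)
  qed
qed

lemma antichain_shift_up:
  assumes BV: "B \<subseteq> V" and B: "is_antichain le B" and above: "\<forall>b\<in>B. j \<le> rank b"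
    and expand: "card {b \<in> B. rank b = j} \<le> card (upper_shadow {b \<in> B. rank b = j})"
  obtains B' where "B' \<subseteq> V" "is_antichain le B'" "card B \<le> card B'"
    "\<forall>b\<in>B'. (b \<in> B \<and> rank b \<noteq> j) \<or> rank b = j + 1"
proof
  define X where "X = {b \<in> B. rank b = j}"
  define U where "U = upper_shadow X"
  have U: "y \<in> V" "rank y = j + 1" "\<exists>x\<in>X. le x y" if "y \<in> U" for y
    using that by (auto simp: U_def X_def upper_shadow_def)
  have "finite B" using BV finite_V by (rule finite_subset)
  have "finite U" using finite_V by (simp add: U_def upper_shadow_def)
  have "X \<subseteq> B" by (simp add: X_def)
  have "y \<notin> U" if "y \<in> B" for y
  proof
    assume "y \<in> U"
    then obtain x where "x \<in> X" "le x y" using U(3) by blast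
    moreover have "x \<noteq> y" using \<open>x \<in> X\<close> U(2)[OF \<open>y \<in> U\<close>] by (auto simp: X_def)
    ultimately show False using B \<open>X \<subseteq> B\<close> that by (auto simp: is_antichain_def)
  qed
  then have "card ((B - X) \<union> U) = card (B - X) + card U"
    using \<open>finite B\<close> \<open>finite U\<close> by (subst card_Un_disjoint) auto
  also have "card (B - X) = card B - card X"
    using \<open>finite B\<close> \<open>X \<subseteq> B\<close> by (meson card_Diff_subset finite_subset)
  finally show "card B \<le> card ((B - X) \<union> U)"
    using expand card_mono[OF \<open>finite B\<close> \<open>X \<subseteq> B\<close>] by (simp add: X_def U_def)
  show "(B - X) \<union> U \<subseteq> V" using BV U(1) by blast
  show "\<forall>b\<in>(B - X) \<union> U. (b \<in> B \<and> rank b \<noteq> j) \<or> rank b = j + 1"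
    using U(2) by (auto simp: X_def)
  show "is_antichain le ((B - X) \<union> U)"
    unfolding U_def by (rule is_antichain_replace_bottom_level[OF BV B above X_def])
qed

lemma converse_ranked_order: "ranked_order V (\<lambda>x y. le y x) (\<lambda>x. - rank x)"
proof
  show "finite V" by (rule finite_V)
next
  fix x y z assume "x \<in> V" "y \<in> V" "z \<in> V" "le y x" "le z y"
  then show "le z x" using le_trans by blast
next
  fix x y assume "x \<in> V" "y \<in> V" "le y x" "x \<noteq> y"
  then show "- rank x < - rank y" using rank_less by fastforce
qed

lemma antichain_shift_down:
  assumes BV: "B \<subseteq> V" and B: "is_antichain le B" and below: "\<forall>b\<in>B. rank b \<le> j"
    and expand: "card {b \<in> B. rank b = j} \<le> card (lower_shadow {b \<in> B. rank b = j})"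
  obtains B' where "B' \<subseteq> V" "is_antichain le B'" "card B \<le> card B'"
    "\<forall>b\<in>B'. (b \<in> B \<and> rank b \<noteq> j) \<or> rank b = j - 1"
proof -
  interpret converse: ranked_order V "\<lambda>x y. le y x" "\<lambda>x. - rank x"
    by (rule converse_ranked_order)
  have "- rank y = - rank x + 1 \<longleftrightarrow> rank y + 1 = rank x" for x y by linarith
  then have shadow: "converse.upper_shadow X = lower_shadow X" for X
    unfolding converse.upper_shadow_def lower_shadow_def by simp
  have "{b \<in> B. - rank b = - j} = {b \<in> B. rank b = j}" by auto
  then have "card {b \<in> B. - rank b = - j} \<le> card (converse.upper_shadow {b \<in> B. - rank b = - j})"
    using expand by (simp add: shadow)
  moreover have "\<forall>b\<in>B. - j \<le> - rank b" using below by simp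
  ultimately obtain B' where B': "B' \<subseteq> V" "is_antichain (\<lambda>x y. le y x) B'" "card B \<le> card B'"
      "\<forall>b\<in>B'. (b \<in> B \<and> - rank b \<noteq> - j) \<or> - rank b = - j + 1"
    using converse.antichain_shift_up[OF BV is_antichain_converse[THEN iffD2, OF B]] by blast
  moreover have "\<forall>b\<in>B'. (b \<in> B \<and> rank b \<noteq> j) \<or> rank b = j - 1"
    using B'(4) by fastforce
  ultimately show thesis
    using that[of B'] is_antichain_converse[of le B'] by simp
qed

lemma antichain_card_le_level_within:
  assumes up: "\<And>j X. j < m \<Longrightarrow> X \<subseteq> level j \<Longrightarrow> card X \<le> card (upper_shadow X)"
    and down: "\<And>j X. m < j \<Longrightarrow> X \<subseteq> level j \<Longrightarrow> card X \<le> card (lower_shadow X)"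
  shows "B \<subseteq> V \<Longrightarrow> is_antichain le B \<Longrightarrow> \<forall>b\<in>B. \<bar>rank b - m\<bar> \<le> int d
    \<Longrightarrow> card B \<le> card (level m)"
proof (induction d arbitrary: B)
  case 0
  then have "B \<subseteq> level m" by (auto simp: level_def)
  then show ?case using finite_V by (intro card_mono) (auto simp: level_def)
next
  case (Suc d)
  define j where "j = m - int d - 1"
  have "\<forall>b\<in>B. j \<le> rank b" using Suc.prems(3) by (auto simp: j_def abs_le_iff)
  moreover have "card {b \<in> B. rank b = j} \<le> card (upper_shadow {b \<in> B. rank b = j})"
    using Suc.prems(1) by (intro up) (auto simp: j_def level_def)
  ultimately obtain B1 where B1: "B1 \<subseteq> V" "is_antichain le B1" "card B \<le> card B1"
      and B1_rank: "\<forall>b\<in>B1. (b \<in> B \<and> rank b \<noteq> j) \<or> rank b = j + 1"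
    using antichain_shift_up[OF Suc.prems(1,2)] by blast
  define k where "k = m + int d + 1"
  have B1_range: "\<forall>b\<in>B1. m - int d \<le> rank b \<and> rank b \<le> k"
    using B1_rank Suc.prems(3) by (fastforce simp: j_def k_def abs_le_iff)
  moreover have "card {b \<in> B1. rank b = k} \<le> card (lower_shadow {b \<in> B1. rank b = k})"
    using B1(1) by (intro down) (auto simp: k_def level_def)
  ultimately obtain B2 where B2: "B2 \<subseteq> V" "is_antichain le B2" "card B1 \<le> card B2"
      and B2_rank: "\<forall>b\<in>B2. (b \<in> B1 \<and> rank b \<noteq> k) \<or> rank b = k - 1"
    using antichain_shift_down[OF B1(1,2)] by blast
  have "\<forall>b\<in>B2. \<bar>rank b - m\<bar> \<le> int d"
    using B2_rank B1_range by (fastforce simp: k_def abs_le_iff)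
  then show ?case using Suc.IH[OF B2(1,2)] B1(3) B2(3) by linarith
qed

text \<open>Shift the lowest and the highest level of the antichain towards m until it lies in level m.\<close>
theorem antichain_card_le_level:
  assumes up: "\<And>j X. j < m \<Longrightarrow> X \<subseteq> level j \<Longrightarrow> card X \<le> card (upper_shadow X)"
    and down: "\<And>j X. m < j \<Longrightarrow> X \<subseteq> level j \<Longrightarrow> card X \<le> card (lower_shadow X)"
    and B: "B \<subseteq> V" "is_antichain le B"
  shows "card B \<le> card (level m)"
proof -
  have "finite ((\<lambda>b. nat \<bar>rank b - m\<bar>) ` B)"
    using B(1) finite_V finite_subset by blast
  then obtain d where "\<forall>b\<in>B. nat \<bar>rank b - m\<bar> \<le> d"
    using finite_nat_set_iff_bounded_le by auto
  then have "\<forall>b\<in>B. \<bar>rank b - m\<bar> \<le> int d" by auto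
  with up down B show ?thesis by (rule antichain_card_le_level_within)
qed

end

section \<open>Pairs of disjoint sets\<close>

text \<open>The pair (S, T) stands for the face of P on which the coordinates in S are maximal, those in T
  minimal, and the spread is 2; the componentwise order on pairs reverses inclusion of faces.\<close>
definition disjoint_pairs :: "('n::finite set \<times> 'n set) set" where
  "disjoint_pairs = {(S, T). S \<noteq> {} \<and> T \<noteq> {} \<and> S \<inter> T = {}}"

definition pair_card :: "'a set \<times> 'a set \<Rightarrow> nat" where
  "pair_card x = card (fst x) + card (snd x)"

lemma mem_disjoint_pairs [simp]: "(S, T) \<in> disjoint_pairs \<longleftrightarrow> S \<noteq> {} \<and> T \<noteq> {} \<and> S \<inter> T = {}"
  by (simp add: disjoint_pairs_def)

lemma pair_card_Pair [simp]: "pair_card (S, T) = card S + card T"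
  by (simp add: pair_card_def)

lemma pair_card_le_CARD:
  assumes "x \<in> (disjoint_pairs :: ('n::finite set \<times> 'n set) set)"
  shows "pair_card x \<le> CARD('n)"
proof -
  obtain S T where x: "x = (S, T)" "S \<inter> T = {}" using assms by (cases x) auto
  then have "pair_card x = card (S \<union> T)" by (simp add: card_Un_disjoint)
  also have "\<dots> \<le> CARD('n)" by (rule card_mono) auto
  finally show ?thesis .
qed

lemma two_le_pair_card:
  assumes "x \<in> disjoint_pairs"
  shows "2 \<le> pair_card x"
proof (cases x)
  case (Pair S T)
  with assms have "card S \<ge> 1" "card T \<ge> 1" by (simp_all add: Suc_le_eq card_gt_0_iff)
  with Pair show ?thesis by simp
qed

lemma swap_mem_disjoint_pairs: "x \<in> disjoint_pairs \<Longrightarrow> prod.swap x \<in> disjoint_pairs"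
  by (cases x) auto

lemma pair_card_swap: "pair_card (prod.swap x) = pair_card x"
  by (simp add: pair_card_def)

lemma exists_pair_card:
  assumes "2 \<le> k" "k \<le> CARD('n::finite)"
  shows "\<exists>x\<in>(disjoint_pairs :: ('n set \<times> 'n set) set). pair_card x = k"
proof -
  obtain u :: 'n where True by blast
  have "k - 1 \<le> card (- {u})"
    using assms by (simp add: Compl_eq_Diff_UNIV card_Diff_subset)
  then obtain W where W: "W \<subseteq> - {u}" "card W = k - 1" "finite W"
    by (rule obtain_subset_with_card_n)
  then have "({u}, W) \<in> disjoint_pairs" "pair_card ({u}, W) = k"
    using assms by auto
  then show ?thesis by blast
qed

lemma pair_card_less:
  fixes x y :: "'a::finite set \<times> 'a set"
  assumes "x \<le> y" "x \<noteq> y"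
  shows "pair_card x < pair_card y"
proof -
  obtain S T S' T' where xy: "x = (S, T)" "y = (S', T')" by (cases x, cases y)
  then have "card S \<le> card S'" "card T \<le> card T'" using assms by (simp_all add: card_mono)
  moreover have "S \<subset> S' \<or> T \<subset> T'" using xy assms by auto
  then have "card S < card S' \<or> card T < card T'" by (meson finite psubset_card_mono)
  ultimately show ?thesis using xy by auto
qed

interpretation pairs: ranked_order "disjoint_pairs :: ('n::finite set \<times> 'n set) set" "(\<le>)"
  "\<lambda>x. int (pair_card x)"
  by unfold_locales (auto simp: pair_card_less)

lemma pair_lower_cover:
  assumes "finite S'" "finite T'" "S \<subseteq> S'" "T \<subseteq> T'" "S' \<inter> T' = {}"
    and card: "card S + card T + 1 = card S' + card T'"
  obtains z where "z \<in> S' \<union> T'" "S = S' - {z}" "T = T' - {z}"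
proof -
  have "card (S' - S) = card S' - card S" "card (T' - T) = card T' - card T"
    using assms by (simp_all add: card_Diff_subset finite_subset)
  moreover have "card S \<le> card S'" "card T \<le> card T'"
    using assms by (simp_all add: card_mono)
  ultimately have "card (S' - S) + card (T' - T) = 1" using card by linarith
  then consider "card (S' - S) = 1" "T' - T = {}" | "S' - S = {}" "card (T' - T) = 1"
    using assms by (auto simp: add_is_1)
  then show thesis
  proof cases
    case 1
    then obtain z where "S' - S = {z}" by (auto simp: card_1_singleton_iff)
    with 1 assms show thesis by (intro that[of z]) auto
  next
    case 2
    then obtain z where "T' - T = {z}" by (auto simp: card_1_singleton_iff)
    with 2 assms show thesis by (intro that[of z]) auto
  qed
qed

lemma upper_covers_disjoint_pair:
  fixes S T :: "'n::finite set"
  assumes "(S, T) \<in> disjoint_pairs"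
  shows "{y \<in> disjoint_pairs. (S, T) \<le> y \<and> pair_card y = card S + card T + 1}
    = (\<lambda>z. (insert z S, T)) ` (- (S \<union> T)) \<union> (\<lambda>z. (S, insert z T)) ` (- (S \<union> T))"
    (is "?covers = ?adjoin")
proof
  show "?covers \<subseteq> ?adjoin"
  proof
    fix y assume "y \<in> ?covers"
    then obtain S' T' where y: "y = (S', T')" "S \<subseteq> S'" "T \<subseteq> T'" "S' \<inter> T' = {}"
      "card S + card T + 1 = card S' + card T'" by (cases y) auto
    obtain z where "z \<in> S' \<union> T'" "S = S' - {z}" "T = T' - {z}"
      using finite finite y(2-5) by (rule pair_lower_cover)
    then show "y \<in> ?adjoin" using y(1,4) by (cases "z \<in> S'") (auto simp: insert_absorb)
  qed
  show "?adjoin \<subseteq> ?covers"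
    using assms by (auto simp: card_insert_if)
qed

lemma card_upper_covers_disjoint_pair:
  fixes S T :: "'n::finite set"
  assumes "(S, T) \<in> disjoint_pairs"
  shows "card {y \<in> disjoint_pairs. (S, T) \<le> y \<and> pair_card y = card S + card T + 1}
    = 2 * (CARD('n) - (card S + card T))"
proof -
  have "card (- (S \<union> T)) = CARD('n) - (card S + card T)"
    using assms by (simp add: Compl_eq_Diff_UNIV card_Diff_subset card_Un_disjoint)
  moreover have "inj_on (\<lambda>z. (insert z S, T)) (- (S \<union> T))" "inj_on (\<lambda>z. (S, insert z T)) (- (S \<union> T))"
    by (auto simp: inj_on_def)
  moreover have "(\<lambda>z. (insert z S, T)) ` (- (S \<union> T)) \<inter> (\<lambda>z. (S, insert z T)) ` (- (S \<union> T)) = {}"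
    by auto
  ultimately show ?thesis
    unfolding upper_covers_disjoint_pair[OF assms] by (simp add: card_Un_disjoint card_image)
qed

lemma lower_covers_subset:
  fixes S' T' :: "'n::finite set"
  assumes "S' \<inter> T' = {}"
  shows "{x. x \<le> (S', T') \<and> pair_card x + 1 = card S' + card T'}
    \<subseteq> (\<lambda>z. (S' - {z}, T' - {z})) ` (S' \<union> T')"
proof
  fix x assume "x \<in> {x. x \<le> (S', T') \<and> pair_card x + 1 = card S' + card T'}"
  then obtain S T where x: "x = (S, T)" "S \<subseteq> S'" "T \<subseteq> T'"
    "card S + card T + 1 = card S' + card T'" by (cases x) auto
  obtain z where "z \<in> S' \<union> T'" "S = S' - {z}" "T = T' - {z}"
    using finite finite x(2,3) assms x(4) by (rule pair_lower_cover)
  then show "x \<in> (\<lambda>z. (S' - {z}, T' - {z})) ` (S' \<union> T')" using x(1) by blast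
qed

lemma card_lower_covers_le:
  fixes S' T' :: "'n::finite set"
  assumes "S' \<inter> T' = {}"
  shows "card {x. x \<le> (S', T') \<and> pair_card x + 1 = card S' + card T'} \<le> card S' + card T'"
proof -
  have "card {x. x \<le> (S', T') \<and> pair_card x + 1 = card S' + card T'}
      \<le> card ((\<lambda>z. (S' - {z}, T' - {z})) ` (S' \<union> T'))"
    by (rule card_mono[OF _ lower_covers_subset[OF assms]]) simp
  also have "\<dots> \<le> card (S' \<union> T')" by (rule card_image_le) simp
  also have "\<dots> = card S' + card T'" using assms by (simp add: card_Un_disjoint)
  finally show ?thesis .
qed

lemma Diff_singleton_nonempty: "2 \<le> card A \<Longrightarrow> A - {z} \<noteq> {}"
proof
  assume "2 \<le> card A" "A - {z} = {}"
  then have "card A \<le> card {z}" by (intro card_mono) auto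
  with \<open>2 \<le> card A\<close> show False by simp
qed

text \<open>Removing an element keeps both parts nonempty unless the element is alone in its part,
  which happens for at most one element once the pair has at least three elements.\<close>
lemma card_lower_covers_ge:
  fixes S T :: "'n::finite set"
  assumes ST: "(S, T) \<in> disjoint_pairs" and three: "3 \<le> card S + card T"
  shows "card S + card T - 1
    \<le> card {x \<in> disjoint_pairs. x \<le> (S, T) \<and> pair_card x + 1 = card S + card T}"
proof -
  define D where "D = (if 2 \<le> card S then S else {}) \<union> (if 2 \<le> card T then T else {})"
  have "card S \<ge> 1" "card T \<ge> 1" using ST by (auto simp: Suc_le_eq card_gt_0_iff)
  moreover have "card D = (if 2 \<le> card S then card S else 0) + (if 2 \<le> card T then card T else 0)"
    using ST unfolding D_def by (simp add: card_Un_disjoint)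
  ultimately have "card S + card T - 1 \<le> card D" using three by auto
  also have "card D = card ((\<lambda>z. (S - {z}, T - {z})) ` D)"
    by (rule card_image[symmetric]) (auto simp: inj_on_def D_def split: if_splits)
  also have "\<dots> \<le> card {x \<in> disjoint_pairs. x \<le> (S, T) \<and> pair_card x + 1 = card S + card T}"
  proof (rule card_mono)
    show "(\<lambda>z. (S - {z}, T - {z})) ` D
        \<subseteq> {x \<in> disjoint_pairs. x \<le> (S, T) \<and> pair_card x + 1 = card S + card T}"
    proof
      fix x assume "x \<in> (\<lambda>z. (S - {z}, T - {z})) ` D"
      then obtain z where x: "x = (S - {z}, T - {z})"
        and z: "z \<in> S \<and> 2 \<le> card S \<or> z \<in> T \<and> 2 \<le> card T"
        by (auto simp: D_def split: if_splits)
      then have "S - {z} \<noteq> {}" "T - {z} \<noteq> {}" using ST by (auto dest: Diff_singleton_nonempty)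
      moreover have "card (S - {z}) + card (T - {z}) + 1 = card S + card T"
        using z ST by (auto simp: card_Diff_singleton_if)
      ultimately show "x \<in> {x \<in> disjoint_pairs. x \<le> (S, T) \<and> pair_card x + 1 = card S + card T}"
        using x ST by auto
    qed
  qed simp
  finally show ?thesis .
qed

lemma pairs_upper_expansion:
  fixes X :: "('n::finite set \<times> 'n set) set"
  assumes X: "X \<subseteq> pairs.level (int j)" and j: "j + 1 \<le> 2 * (CARD('n) - j)"
  shows "card X \<le> card (pairs.upper_shadow X)"
proof -
  have "card X \<le> card {y \<in> pairs.level (int (j + 1)). \<exists>x\<in>X. x \<le> y}"
  proof (rule card_le_card_neighbours[where a = "2 * (CARD('n) - j)" and b = "j + 1"])
    fix x assume "x \<in> X"
    then obtain S T where x: "x = (S, T)" "(S, T) \<in> disjoint_pairs" "card S + card T = j"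
      using X by (cases x) (auto simp: pairs.level_def)
    then have "{y \<in> pairs.level (int (j + 1)). x \<le> y}
        = {y \<in> disjoint_pairs. (S, T) \<le> y \<and> pair_card y = card S + card T + 1}"
      by (auto simp: pairs.level_def)
    then show "2 * (CARD('n) - j) \<le> card {y \<in> pairs.level (int (j + 1)). x \<le> y}"
      using card_upper_covers_disjoint_pair[OF x(2)] x(3) by simp
  next
    fix y :: "'n set \<times> 'n set" assume "y \<in> pairs.level (int (j + 1))"
    then obtain S' T' where y: "y = (S', T')" "S' \<inter> T' = {}" "card S' + card T' = j + 1"
      by (cases y) (auto simp: pairs.level_def)
    have "{x \<in> X. x \<le> y} \<subseteq> {x. x \<le> (S', T') \<and> pair_card x + 1 = card S' + card T'}"
      using X y by (auto simp: pairs.level_def)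
    then have "card {x \<in> X. x \<le> y}
        \<le> card {x. x \<le> (S', T') \<and> pair_card x + 1 = card S' + card T'}"
      by (rule card_mono[OF finite])
    also have "\<dots> \<le> j + 1" using card_lower_covers_le[OF y(2)] y(3) by simp
    finally show "card {x \<in> X. x \<le> y} \<le> j + 1" .
  qed (use j in \<open>auto simp: pairs.level_def\<close>)
  also have "{y \<in> pairs.level (int (j + 1)). \<exists>x\<in>X. x \<le> y} = pairs.upper_shadow X"
    using X unfolding pairs.level_def pairs.upper_shadow_def by fastforce
  finally show ?thesis .
qed

lemma pairs_lower_expansion:
  fixes X :: "('n::finite set \<times> 'n set) set"
  assumes X: "X \<subseteq> pairs.level (int j)" and j: "3 \<le> j" "2 * (CARD('n) + 1 - j) \<le> j - 1"
  shows "card X \<le> card (pairs.lower_shadow X)"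
proof -
  have "card X \<le> card {y \<in> pairs.level (int (j - 1)). \<exists>x\<in>X. y \<le> x}"
  proof (rule card_le_card_neighbours[where a = "j - 1" and b = "2 * (CARD('n) + 1 - j)"])
    fix x assume "x \<in> X"
    then obtain S T where x: "x = (S, T)" "(S, T) \<in> disjoint_pairs" "card S + card T = j"
      using X by (cases x) (auto simp: pairs.level_def)
    then have "{y \<in> pairs.level (int (j - 1)). y \<le> x}
        = {y \<in> disjoint_pairs. y \<le> (S, T) \<and> pair_card y + 1 = card S + card T}"
      using j by (auto simp: pairs.level_def)
    then show "j - 1 \<le> card {y \<in> pairs.level (int (j - 1)). y \<le> x}"
      using card_lower_covers_ge[OF x(2)] x(3) j by simp
  next
    fix y :: "'n set \<times> 'n set" assume "y \<in> pairs.level (int (j - 1))"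
    then obtain S T where y: "y = (S, T)" "(S, T) \<in> disjoint_pairs" "card S + card T = j - 1"
      by (cases y) (auto simp: pairs.level_def)
    have "{x \<in> X. y \<le> x} \<subseteq> {x \<in> disjoint_pairs. (S, T) \<le> x \<and> pair_card x = card S + card T + 1}"
      using X y j by (auto simp: pairs.level_def)
    then have "card {x \<in> X. y \<le> x}
        \<le> card {x \<in> disjoint_pairs. (S, T) \<le> x \<and> pair_card x = card S + card T + 1}"
      by (rule card_mono[OF finite])
    also have "\<dots> = 2 * (CARD('n) + 1 - j)"
      using card_upper_covers_disjoint_pair[OF y(2)] y(3) j by simp
    finally show "card {x \<in> X. y \<le> x} \<le> 2 * (CARD('n) + 1 - j)" .
  qed (use j in \<open>auto simp: pairs.level_def\<close>)
  also have "{y \<in> pairs.level (int (j - 1)). \<exists>x\<in>X. y \<le> x} = pairs.lower_shadow X"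
    using X j unfolding pairs.level_def pairs.lower_shadow_def by fastforce
  finally show ?thesis .
qed

theorem disjoint_pairs_antichain_card_le:
  fixes B :: "('n::finite set \<times> 'n set) set"
  assumes "2 \<le> CARD('n)" "B \<subseteq> disjoint_pairs" "is_antichain (\<le>) B"
  shows "card B \<le> card (pairs.level (int (CARD('n) - CARD('n) div 3)) :: ('n set \<times> 'n set) set)"
proof (rule pairs.antichain_card_le_level[OF _ _ assms(2,3)])
  fix j :: int and X :: "('n set \<times> 'n set) set"
  assume j: "j < int (CARD('n) - CARD('n) div 3)" and X: "X \<subseteq> pairs.level j"
  show "card X \<le> card (pairs.upper_shadow X)"
  proof (cases "j < 0")
    case True
    with X have "X = {}" by (auto simp: pairs.level_def)
    then show ?thesis by simp
  next
    case False
    then have "X \<subseteq> pairs.level (int (nat j))" using X by simp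
    moreover have "nat j + 1 \<le> 2 * (CARD('n) - nat j)" using j False by linarith
    ultimately show ?thesis by (rule pairs_upper_expansion)
  qed
next
  fix j :: int and X :: "('n set \<times> 'n set) set"
  assume j: "int (CARD('n) - CARD('n) div 3) < j" and X: "X \<subseteq> pairs.level j"
  have "0 < j" using j by (meson of_nat_0_le_iff le_less_trans)
  with X have "X \<subseteq> pairs.level (int (nat j))" by simp
  moreover have "3 \<le> nat j" "2 * (CARD('n) + 1 - nat j) \<le> nat j - 1"
    using j assms(1) by linarith+
  ultimately show "card X \<le> card (pairs.lower_shadow X)" by (rule pairs_lower_expansion)
qed

section \<open>Faces of the polytope\<close>

lemma mem_Pspread_iff: "x \<in> Pspread \<longleftrightarrow> (\<forall>i j. x $ i - x $ j \<le> 2)"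
proof -
  let ?R = "range (\<lambda>i. x $ i)"
  have R: "finite ?R" "?R \<noteq> {}" by auto
  obtain i0 where max: "Max ?R = x $ i0" using Max_in[OF R] by blast
  obtain j0 where min: "Min ?R = x $ j0" using Min_in[OF R] by blast
  have "x $ i \<le> x $ i0" "x $ j0 \<le> x $ j" for i j
    using Max_ge[OF R(1)] Min_le[OF R(1)] max min by (metis rangeI)+
  then have "(\<forall>i j. x $ i - x $ j \<le> 2) \<longleftrightarrow> x $ i0 - x $ j0 \<le> 2"
    by (smt (verit))
  then show ?thesis by (simp add: Pspread_def max min)
qed

lemma zero_mem_Pspread: "0 \<in> Pspread"
  by (simp add: mem_Pspread_iff)

lemma convex_common_slack_point:
  fixes F :: "'a::real_inner set"
  assumes "convex F" "F \<noteq> {}" "finite Q"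
    and "\<forall>q\<in>Q. \<forall>x\<in>F. a q \<bullet> x \<le> c q" "\<forall>q\<in>Q. \<exists>x\<in>F. a q \<bullet> x < c q"
  shows "\<exists>x\<in>F. \<forall>q\<in>Q. a q \<bullet> x < c q"
  using \<open>finite Q\<close> assms(4,5)
proof (induction Q rule: finite_induct)
  case empty
  then show ?case using \<open>F \<noteq> {}\<close> by auto
next
  case (insert q Q)
  then obtain x1 x2 where x1: "x1 \<in> F" "\<forall>p\<in>Q. a p \<bullet> x1 < c p"
    and x2: "x2 \<in> F" "a q \<bullet> x2 < c q" by auto
  define x where "x = (1/2) *\<^sub>R x1 + (1/2) *\<^sub>R x2"
  have "x \<in> F" using \<open>convex F\<close> x1(1) x2(1) by (simp add: x_def convexD)
  moreover have "a p \<bullet> x = (a p \<bullet> x1 + a p \<bullet> x2) / 2" for p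
    by (simp add: x_def inner_add_right)
  moreover have "a p \<bullet> x < c p" if "p \<in> insert q Q" for p
  proof -
    have "a p \<bullet> x1 \<le> c p" "a p \<bullet> x2 \<le> c p" "a p \<bullet> x1 < c p \<or> a p \<bullet> x2 < c p"
      using insert.prems that x1 x2 by auto
    then show ?thesis using \<open>a p \<bullet> x = (a p \<bullet> x1 + a p \<bullet> x2) / 2\<close> by argo
  qed
  ultimately show ?case by blast
qed

lemma halfspaces_contain_extension:
  fixes x0 y :: "'a::real_inner"
  assumes "finite Q" and Q: "\<forall>q\<in>Q. a q \<bullet> x0 < c q \<or> a q \<bullet> x0 = c q \<and> a q \<bullet> y = c q"
  obtains e where "0 < e" "\<forall>q\<in>Q. a q \<bullet> (x0 + e *\<^sub>R (x0 - y)) \<le> c q"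
proof -
  have inner_ext: "v \<bullet> (x0 + e *\<^sub>R (x0 - y)) = v \<bullet> x0 + e * (v \<bullet> x0 - v \<bullet> y)" for v e
    by (simp add: inner_add_right inner_diff_right)
  have "\<forall>\<^sub>F e in at_right 0. a q \<bullet> (x0 + e *\<^sub>R (x0 - y)) \<le> c q" if q: "q \<in> Q" for q
  proof (cases "a q \<bullet> x0 < c q")
    case True
    have "((\<lambda>e. a q \<bullet> x0 + e * (a q \<bullet> x0 - a q \<bullet> y))
        \<longlongrightarrow> a q \<bullet> x0 + 0 * (a q \<bullet> x0 - a q \<bullet> y)) (at_right 0)"
      by (intro tendsto_intros)
    then have "\<forall>\<^sub>F e in at_right 0. a q \<bullet> x0 + e * (a q \<bullet> x0 - a q \<bullet> y) < c q"
      using True by (auto intro: order_tendstoD(2))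
    then show ?thesis by (rule eventually_mono) (simp add: inner_ext)
  next
    case False
    then have "a q \<bullet> x0 = c q" "a q \<bullet> y = c q" using Q q by auto
    then show ?thesis by (simp add: inner_ext)
  qed
  then have "\<forall>\<^sub>F e in at_right 0. \<forall>q\<in>Q. a q \<bullet> (x0 + e *\<^sub>R (x0 - y)) \<le> c q"
    using \<open>finite Q\<close> by (intro eventually_ball_finite) auto
  with eventually_at_right_less
  have "\<forall>\<^sub>F e in at_right 0. 0 < e \<and> (\<forall>q\<in>Q. a q \<bullet> (x0 + e *\<^sub>R (x0 - y)) \<le> c q)"
    by (rule eventually_conj)
  then show thesis using that by (auto dest: eventually_happens)
qed

text \<open>If y satisfies the constraints tight on F, extend the segment from y through a point x0 of F
  that is slack in all other constraints slightly beyond x0; the supporting inequality at the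
  resulting point of P forces y into F.\<close>
lemma exposed_face_eq_tight_constraints:
  fixes P :: "'a::real_inner set"
  assumes P: "P = {x. \<forall>q\<in>Q. a q \<bullet> x \<le> c q}" and "finite Q"
    and supp: "\<forall>x\<in>P. b \<bullet> x \<le> d" and F: "F = P \<inter> {x. b \<bullet> x = d}" "F \<noteq> {}"
  shows "F = {x \<in> P. \<forall>q\<in>Q. (\<forall>y\<in>F. a q \<bullet> y = c q) \<longrightarrow> a q \<bullet> x = c q}"
proof
  define R where "R = {q \<in> Q. \<forall>y\<in>F. a q \<bullet> y = c q}"
  show "{x \<in> P. \<forall>q\<in>Q. (\<forall>y\<in>F. a q \<bullet> y = c q) \<longrightarrow> a q \<bullet> x = c q} \<subseteq> F"
  proof
    fix y assume y: "y \<in> {x \<in> P. \<forall>q\<in>Q. (\<forall>y\<in>F. a q \<bullet> y = c q) \<longrightarrow> a q \<bullet> x = c q}"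
    have "P = (\<Inter>q\<in>Q. {x. a q \<bullet> x \<le> c q})" using P by auto
    then have "convex F"
      unfolding F by (simp add: convex_Int convex_hyperplane convex_INT convex_halfspace_le)
    moreover have "\<exists>x\<in>F. a q \<bullet> x < c q" if q: "q \<in> Q - R" for q
    proof -
      obtain x where "x \<in> F" "a q \<bullet> x \<noteq> c q" using q unfolding R_def by blast
      moreover have "a q \<bullet> x \<le> c q" using \<open>x \<in> F\<close> q F(1) P by auto
      ultimately show ?thesis by force
    qed
    ultimately obtain x0 where x0: "x0 \<in> F" "\<forall>q\<in>Q - R. a q \<bullet> x0 < c q"
      using convex_common_slack_point[of F "Q - R" a c] \<open>finite Q\<close> F P by auto
    then have "\<forall>q\<in>Q. a q \<bullet> x0 < c q \<or> a q \<bullet> x0 = c q \<and> a q \<bullet> y = c q"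
      using y by (auto simp: R_def)
    then obtain e where "0 < e" and "\<forall>q\<in>Q. a q \<bullet> (x0 + e *\<^sub>R (x0 - y)) \<le> c q"
      using halfspaces_contain_extension \<open>finite Q\<close> by blast
    then have "b \<bullet> (x0 + e *\<^sub>R (x0 - y)) \<le> d" using supp P by simp
    moreover have "b \<bullet> x0 = d" "b \<bullet> y \<le> d" using x0(1) y F supp by auto
    ultimately have "e * (d - b \<bullet> y) \<le> 0" by (simp add: algebra_simps inner_add_right inner_diff_right)
    then have "b \<bullet> y = d" using \<open>0 < e\<close> \<open>b \<bullet> y \<le> d\<close> by (simp add: mult_le_0_iff)
    then show "y \<in> F" using y F by simp
  qed
qed (use F in auto)

definition spread_face :: "'n::finite set \<Rightarrow> 'n set \<Rightarrow> (real ^ 'n) set" where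
  "spread_face S T = {x \<in> Pspread. \<forall>i\<in>S. \<forall>j\<in>T. x $ i - x $ j = 2}"

definition face_point :: "'n::finite set \<Rightarrow> 'n set \<Rightarrow> real ^ 'n" where
  "face_point S T = (\<chi> i. if i \<in> S then 2 else if i \<in> T then 0 else 1)"

lemma spread_face_antimono: "S' \<subseteq> S \<Longrightarrow> T' \<subseteq> T \<Longrightarrow> spread_face S T \<subseteq> spread_face S' T'"
  unfolding spread_face_def by blast

lemma uminus_spread_face: "uminus ` spread_face S T = spread_face T S"
proof -
  have "- x \<in> spread_face S T \<longleftrightarrow> x \<in> spread_face T S" for x
    by (auto simp: spread_face_def mem_Pspread_iff)
  then show ?thesis by (force intro: image_eqI[of _ uminus "- x" for x])
qed

lemma face_point_mem_spread_face_iff: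
  assumes "S \<inter> T = {}" "S' \<noteq> {}" "T' \<noteq> {}"
  shows "face_point S T \<in> spread_face S' T' \<longleftrightarrow> S' \<subseteq> S \<and> T' \<subseteq> T"
proof -
  have "face_point S T \<in> Pspread" by (simp add: face_point_def mem_Pspread_iff)
  moreover have "face_point S T $ i - face_point S T $ j = 2 \<longleftrightarrow> i \<in> S \<and> j \<in> T" for i j
    using assms(1) by (auto simp: face_point_def)
  ultimately show ?thesis using assms(2,3) by (auto simp: spread_face_def)
qed

lemma face_point_mem_spread_face: "S \<inter> T = {} \<Longrightarrow> face_point S T \<in> spread_face S T"
  by (auto simp: spread_face_def face_point_def mem_Pspread_iff)

lemma zero_notin_spread_face: "S \<noteq> {} \<Longrightarrow> T \<noteq> {} \<Longrightarrow> 0 \<notin> spread_face S T"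
  by (auto simp: spread_face_def)

lemma inner_axis_diff: "(axis i 1 - axis j 1) \<bullet> x = x $ i - x $ j"
  by (simp add: inner_diff_left inner_axis')

lemma Pspread_eq_halfspaces:
  "Pspread = {x. \<forall>q\<in>UNIV. (axis (fst q) 1 - axis (snd q) 1) \<bullet> x \<le> (2::real)}"
  by (auto simp: mem_Pspread_iff inner_axis_diff)

text \<open>Tightness propagates: x i - x j' = 2, x i' - x j = 2 and x i' - x j' \<le> 2 give x i - x j \<ge> 2.\<close>
lemma tight_pairs_spread_face:
  "{x \<in> Pspread. \<forall>(i, j)\<in>R. x $ i - x $ j = 2} = spread_face (fst ` R) (snd ` R)"
proof
  show "{x \<in> Pspread. \<forall>(i, j)\<in>R. x $ i - x $ j = 2} \<subseteq> spread_face (fst ` R) (snd ` R)"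
  proof
    fix x assume x: "x \<in> {x \<in> Pspread. \<forall>(i, j)\<in>R. x $ i - x $ j = 2}"
    have "x $ i - x $ j = 2" if ij: "i \<in> fst ` R" "j \<in> snd ` R" for i j
    proof -
      obtain j' i' where "(i, j') \<in> R" "(i', j) \<in> R" using ij by force
      then have "x $ i - x $ j' = 2" "x $ i' - x $ j = 2" using x by auto
      moreover have "x $ i' - x $ j' \<le> 2" "x $ i - x $ j \<le> 2" using x by (simp_all add: mem_Pspread_iff)
      ultimately show ?thesis by linarith
    qed
    then show "x \<in> spread_face (fst ` R) (snd ` R)" using x by (simp add: spread_face_def)
  qed
  show "spread_face (fst ` R) (snd ` R) \<subseteq> {x \<in> Pspread. \<forall>(i, j)\<in>R. x $ i - x $ j = 2}"
    by (force simp: spread_face_def)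
qed

lemma proper_face_spread_face:
  fixes S T :: "'n::finite set"
  assumes ST: "(S, T) \<in> disjoint_pairs"
  shows "proper_face Pspread (spread_face S T)"
proof -
  define b :: "real ^ 'n" where "b = (\<Sum>p\<in>S \<times> T. axis (fst p) 1 - axis (snd p) 1)"
  define slack where "slack x p = 2 - (x $ fst p - x $ snd p)" for x :: "real ^ 'n" and p
  have inner_b: "b \<bullet> x = 2 * real (card (S \<times> T)) - (\<Sum>p\<in>S \<times> T. slack x p)" for x
  proof -
    have "b \<bullet> x = (\<Sum>p\<in>S \<times> T. x $ fst p - x $ snd p)"
      unfolding b_def inner_sum_left by (simp add: inner_axis_diff)
    then show ?thesis by (simp add: slack_def sum_subtractf)
  qed
  have slack_nonneg: "0 \<le> slack x p" if "x \<in> Pspread" for x p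
    using that by (simp add: slack_def mem_Pspread_iff)
  have supp: "\<forall>x\<in>Pspread. b \<bullet> x \<le> 2 * real (card (S \<times> T))"
    by (simp add: inner_b slack_nonneg sum_nonneg)
  have "x \<in> spread_face S T \<longleftrightarrow> x \<in> Pspread \<and> (\<forall>p\<in>S \<times> T. slack x p = 0)" for x
    by (auto simp: spread_face_def slack_def)
  also have "\<dots> x \<longleftrightarrow> x \<in> Pspread \<and> b \<bullet> x = 2 * real (card (S \<times> T))" for x
    using sum_nonneg_eq_0_iff[of "S \<times> T" "slack x"] slack_nonneg[of x] by (auto simp: inner_b)
  finally have "spread_face S T = Pspread \<inter> {x. b \<bullet> x = 2 * real (card (S \<times> T))}" by blast
  moreover have "spread_face S T \<noteq> {}" using face_point_mem_spread_face ST by auto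
  moreover have "spread_face S T \<noteq> Pspread"
    using zero_mem_Pspread zero_notin_spread_face ST by auto
  ultimately show ?thesis
    unfolding proper_face_def poly_face_def
    by (intro conjI disjI2 exI[of _ b] exI[of _ "2 * real (card (S \<times> T))"]) (use supp in auto)
qed

lemma proper_face_Pspread_iff:
  "proper_face Pspread F \<longleftrightarrow> (\<exists>S T. (S, T) \<in> disjoint_pairs \<and> F = spread_face S T)"
proof
  assume "proper_face Pspread F"
  then obtain b d where supp: "\<forall>x\<in>Pspread. b \<bullet> x \<le> d"
    and F: "F = Pspread \<inter> {x. b \<bullet> x = d}" "F \<noteq> {}" and "F \<noteq> Pspread"
    by (auto simp: proper_face_def poly_face_def)
  define R where "R = {(i, j). \<forall>y\<in>F. y $ i - y $ j = 2}"
  have F_tight: "F = {x \<in> Pspread. \<forall>(i, j)\<in>R. x $ i - x $ j = 2}"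
    using exposed_face_eq_tight_constraints[OF Pspread_eq_halfspaces finite supp F]
    by (simp add: R_def inner_axis_diff case_prod_unfold)
  then have F_eq: "F = spread_face (fst ` R) (snd ` R)" by (simp add: tight_pairs_spread_face)
  have "R \<noteq> {}"
    using \<open>F \<noteq> Pspread\<close> F_tight by auto
  moreover have "fst ` R \<inter> snd ` R = {}"
  proof -
    obtain y where "y \<in> F" using F(2) by blast
    then have "i \<notin> snd ` R" if "i \<in> fst ` R" for i
      using that F_eq unfolding spread_face_def by fastforce
    then show ?thesis by blast
  qed
  ultimately show "\<exists>S T. (S, T) \<in> disjoint_pairs \<and> F = spread_face S T"
    using F_eq by (intro exI[of _ "fst ` R"] exI[of _ "snd ` R"]) auto
next
  assume "\<exists>S T. (S, T) \<in> disjoint_pairs \<and> F = spread_face S T"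
  then show "proper_face Pspread F" using proper_face_spread_face by blast
qed

text \<open>With U = S \<union> T, these vectors span the directions of the face: the coordinates outside U move
  independently, those in U move together.\<close>
definition face_directions :: "'n::finite set \<Rightarrow> (real ^ 'n) set" where
  "face_directions U = insert (\<chi> i. if i \<in> U then 1 else 0) ((\<lambda>l. axis l 1) ` (- U))"

lemma independent_face_directions:
  fixes U :: "'n::finite set"
  assumes "U \<noteq> {}"
  shows "independent (face_directions U)"
proof (rule pairwise_orthogonal_independent)
  let ?w = "(\<chi> i. if i \<in> U then 1 else 0) :: real ^ 'n"
  obtain u where "u \<in> U" using assms by blast
  then have "?w $ u \<noteq> 0 $ u" by simp
  then have "?w \<noteq> 0" by metis
  then show "0 \<notin> face_directions U" by (auto simp: face_directions_def)
  have "?w \<bullet> axis l 1 = 0" "axis l 1 \<bullet> ?w = 0" if "l \<notin> U" for l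
    using that by (simp_all add: inner_axis inner_axis')
  then show "pairwise orthogonal (face_directions U)"
    by (auto simp: pairwise_def orthogonal_def face_directions_def inner_axis_axis)
qed

lemma card_face_directions:
  fixes U :: "'n::finite set"
  assumes "U \<noteq> {}"
  shows "card (face_directions U) = CARD('n) - card U + 1"
proof -
  let ?w = "(\<chi> i. if i \<in> U then 1 else 0) :: real ^ 'n"
  obtain u where "u \<in> U" using assms by blast
  have "?w \<noteq> axis l 1" if "l \<notin> U" for l
  proof
    assume "?w = axis l 1"
    then have "?w $ u = axis l 1 $ u" by simp
    with \<open>u \<in> U\<close> that show False by (auto simp: axis_def split: if_splits)
  qed
  then have "?w \<notin> (\<lambda>l. axis l 1) ` (- U)" by blast
  moreover have "inj_on (\<lambda>l. axis l (1::real) :: real ^ 'n) (- U)"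
    by (simp add: inj_on_def axis_eq_axis)
  ultimately show ?thesis
    by (simp add: face_directions_def card_image Compl_eq_Diff_UNIV card_Diff_subset)
qed

lemma face_point_add_half_direction:
  assumes ST: "(S, T) \<in> disjoint_pairs" and v: "v \<in> face_directions (S \<union> T)"
  shows "face_point S T + (1/2) *\<^sub>R v \<in> spread_face S T"
proof -
  consider "v = (\<chi> i. if i \<in> S \<union> T then 1 else 0)" | l where "l \<notin> S \<union> T" "v = axis l 1"
    using v by (auto simp: face_directions_def)
  then show ?thesis
    by cases (use ST in \<open>auto simp: spread_face_def face_point_def mem_Pspread_iff axis_def\<close>)
qed

text \<open>A point of the face is constant on S, equal to that constant minus 2 on T, and free elsewhere.\<close>
lemma spread_face_minus_face_point:
  fixes S T :: "'n::finite set"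
  assumes ST: "(S, T) \<in> disjoint_pairs" and x: "x \<in> spread_face S T" and u: "u \<in> S"
  shows "x - face_point S T = (\<Sum>l\<in>- (S \<union> T). (x $ l - 1) *\<^sub>R axis l 1)
    + (x $ u - 2) *\<^sub>R (\<chi> i. if i \<in> S \<union> T then 1 else 0)"
proof -
  obtain j0 where "j0 \<in> T" using ST by auto
  have xS: "x $ i = x $ u" if "i \<in> S" for i
  proof -
    have "x $ i - x $ j0 = 2" "x $ u - x $ j0 = 2" using x that u \<open>j0 \<in> T\<close> by (auto simp: spread_face_def)
    then show ?thesis by simp
  qed
  have xT: "x $ j = x $ u - 2" if "j \<in> T" for j
    using x that u unfolding spread_face_def by fastforce
  define a where "a = (\<Sum>l\<in>- (S \<union> T). (x $ l - 1) *\<^sub>R axis l (1::real))"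
  have a_nth: "a $ i = (if i \<in> S \<union> T then 0 else x $ i - 1)" for i
    unfolding a_def
    by (simp add: sum_component axis_def if_distrib[of "\<lambda>t. _ * t"] sum.delta cong: if_cong)
  have "x - face_point S T = a + (x $ u - 2) *\<^sub>R (\<chi> i. if i \<in> S \<union> T then 1 else 0)"
    using xS xT ST by (auto simp: vec_eq_iff face_point_def a_nth)
  then show ?thesis by (simp add: a_def)
qed

lemma span_spread_face_translate:
  fixes S T :: "'n::finite set"
  assumes ST: "(S, T) \<in> disjoint_pairs"
  shows "span ((\<lambda>x. x - face_point S T) ` spread_face S T) = span (face_directions (S \<union> T))"
    (is "span ?G = span ?B")
proof -
  have "?B \<subseteq> span ?G"
  proof
    fix v assume "v \<in> ?B"
    then have "(1/2) *\<^sub>R v \<in> ?G"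
      by (intro rev_image_eqI[OF face_point_add_half_direction[OF ST]]) simp_all
    then have "2 *\<^sub>R ((1/2) *\<^sub>R v) \<in> span ?G" by (intro span_mul span_base)
    then show "v \<in> span ?G" by simp
  qed
  moreover have "?G \<subseteq> span ?B"
  proof
    fix g assume "g \<in> ?G"
    then obtain x where x: "x \<in> spread_face S T" "g = x - face_point S T" by blast
    obtain u where "u \<in> S" using ST by auto
    have "x - face_point S T \<in> span ?B"
      unfolding spread_face_minus_face_point[OF ST x(1) \<open>u \<in> S\<close>] face_directions_def
      by (intro span_add span_sum span_mul span_base) auto
    then show "g \<in> span ?B" using x(2) by simp
  qed
  ultimately show ?thesis by (simp add: span_eq)
qed

lemma aff_dim_spread_face:
  fixes S T :: "'n::finite set"
  assumes ST: "(S, T) \<in> disjoint_pairs"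
  shows "aff_dim (spread_face S T) = int CARD('n) + 1 - int (card S + card T)"
proof -
  have "aff_dim (spread_face S T) = int (dim ((\<lambda>x. x - face_point S T) ` spread_face S T))"
    using face_point_mem_spread_face ST by (intro aff_dim_eq_dim_subtract hull_inc) auto
  also have "\<dots> = int (card (face_directions (S \<union> T)))"
    using ST by (metis dim_span span_spread_face_translate dim_eq_card_independent
        independent_face_directions Un_empty mem_disjoint_pairs)
  also have "\<dots> = int CARD('n) + 1 - int (card S + card T)"
    using ST pair_card_le_CARD[OF ST] by (simp add: card_face_directions card_Un_disjoint)
  finally show ?thesis .
qed

section \<open>Double-faces\<close>

definition double_spread_face :: "'n::finite set \<times> 'n set \<Rightarrow> (real ^ 'n) set" where
  "double_spread_face x = spread_face (fst x) (snd x) \<union> spread_face (snd x) (fst x)"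

lemma double_face_Pspread_iff:
  "double_face Pspread D \<longleftrightarrow> D \<in> double_spread_face ` disjoint_pairs"
proof
  assume "double_face Pspread D"
  then obtain S T where "(S, T) \<in> disjoint_pairs" "D = spread_face S T \<union> uminus ` spread_face S T"
    by (auto simp: double_face_def proper_face_Pspread_iff)
  then show "D \<in> double_spread_face ` disjoint_pairs"
    by (intro image_eqI[of _ _ "(S, T)"]) (simp_all add: double_spread_face_def uminus_spread_face)
next
  assume "D \<in> double_spread_face ` disjoint_pairs"
  then obtain S T where "(S, T) \<in> disjoint_pairs" "D = double_spread_face (S, T)" by auto
  then show "double_face Pspread D"
    unfolding double_face_def using proper_face_spread_face
    by (intro exI[of _ "spread_face S T"]) (simp add: double_spread_face_def uminus_spread_face)
qed

lemma df_lattice_Pspread: "df_lattice Pspread = double_spread_face ` disjoint_pairs \<union> {Pspread, {}}"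
  by (auto simp: df_lattice_def double_face_Pspread_iff)

lemma double_spread_face_swap: "double_spread_face (prod.swap x) = double_spread_face x"
  by (auto simp: double_spread_face_def)

lemma double_spread_face_subset_iff:
  assumes "x \<in> disjoint_pairs" "y \<in> disjoint_pairs"
  shows "double_spread_face x \<subseteq> double_spread_face y \<longleftrightarrow> y \<le> x \<or> prod.swap y \<le> x"
proof -
  obtain S T S' T' where xy: "x = (S, T)" "y = (S', T')" by (cases x, cases y)
  with assms have ST: "S \<inter> T = {}" "S' \<noteq> {}" "T' \<noteq> {}" by auto
  show ?thesis
  proof
    assume "double_spread_face x \<subseteq> double_spread_face y"
    moreover have "face_point S T \<in> double_spread_face x"
      using face_point_mem_spread_face[OF ST(1)] xy by (simp add: double_spread_face_def)
    ultimately have "face_point S T \<in> spread_face S' T' \<or> face_point S T \<in> spread_face T' S'"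
      using xy by (auto simp: double_spread_face_def)
    then show "y \<le> x \<or> prod.swap y \<le> x"
      using xy face_point_mem_spread_face_iff[OF ST(1)] ST by auto
  next
    assume "y \<le> x \<or> prod.swap y \<le> x"
    then have "S' \<subseteq> S \<and> T' \<subseteq> T \<or> T' \<subseteq> S \<and> S' \<subseteq> T" using xy by auto
    then have "spread_face S T \<subseteq> spread_face S' T' \<and> spread_face T S \<subseteq> spread_face T' S'
        \<or> spread_face S T \<subseteq> spread_face T' S' \<and> spread_face T S \<subseteq> spread_face S' T'"
      using spread_face_antimono[of S' S T' T] spread_face_antimono[of T' T S' S]
        spread_face_antimono[of T' S S' T] spread_face_antimono[of S' T T' S] by blast
    then show "double_spread_face x \<subseteq> double_spread_face y"
      using xy by (auto simp: double_spread_face_def)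
  qed
qed

lemma double_spread_face_eq_iff:
  assumes x: "x \<in> disjoint_pairs" and y: "y \<in> disjoint_pairs"
  shows "double_spread_face x = double_spread_face y \<longleftrightarrow> y = x \<or> y = prod.swap x"
proof
  obtain S T S' T' where xy: "x = (S, T)" "y = (S', T')" by (cases x, cases y)
  with x y have ST: "S \<noteq> {}" "S \<inter> T = {}" by auto
  assume "double_spread_face x = double_spread_face y"
  then have "S' \<subseteq> S \<and> T' \<subseteq> T \<or> T' \<subseteq> S \<and> S' \<subseteq> T" "S \<subseteq> S' \<and> T \<subseteq> T' \<or> T \<subseteq> S' \<and> S \<subseteq> T'"
    using double_spread_face_subset_iff[OF x y] double_spread_face_subset_iff[OF y x] xy by auto
  with ST show "y = x \<or> y = prod.swap x"
    using xy by auto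
qed (auto simp: double_spread_face_swap)

lemma double_spread_face_proper:
  assumes "x \<in> disjoint_pairs"
  shows "double_spread_face x \<subseteq> Pspread" "double_spread_face x \<noteq> {}"
    "double_spread_face x \<noteq> Pspread"
proof -
  obtain S T where x: "x = (S, T)" "S \<noteq> {}" "T \<noteq> {}" "S \<inter> T = {}"
    using assms by (cases x) auto
  show "double_spread_face x \<subseteq> Pspread"
    by (auto simp: double_spread_face_def spread_face_def)
  show "double_spread_face x \<noteq> {}"
    using face_point_mem_spread_face[OF x(4)] x(1) by (auto simp: double_spread_face_def)
  show "double_spread_face x \<noteq> Pspread"
    using zero_mem_Pspread zero_notin_spread_face[OF x(2,3)] zero_notin_spread_face[OF x(3,2)] x(1)
    by (auto simp: double_spread_face_def)
qed

text \<open>The rank of a double-face is read off an arbitrary face representing it (via SOME); both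
  representatives are faces of pairs of the same size.\<close>
lemma df_rank_double_spread_face:
  fixes x :: "'n::finite set \<times> 'n set"
  assumes x: "x \<in> disjoint_pairs"
  shows "df_rank Pspread (double_spread_face x) = int CARD('n) + 1 - int (pair_card x)"
proof -
  let ?F = "SOME F. proper_face Pspread F \<and> double_spread_face x = F \<union> uminus ` F"
  have "\<exists>F. proper_face Pspread F \<and> double_spread_face x = F \<union> uminus ` F"
    using x double_face_Pspread_iff[of "double_spread_face x"] by (simp add: double_face_def)
  from someI_ex[OF this]
  have F: "proper_face Pspread ?F" "double_spread_face x = ?F \<union> uminus ` ?F" by blast+
  then obtain S T where ST: "(S, T) \<in> disjoint_pairs" "?F = spread_face S T"
    by (auto simp: proper_face_Pspread_iff)
  then have "double_spread_face (S, T) = double_spread_face x"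
    using F(2) by (simp add: double_spread_face_def uminus_spread_face)
  then have "(S, T) = x \<or> (S, T) = prod.swap x"
    using double_spread_face_eq_iff[OF x ST(1)] by simp
  then have "card S + card T = pair_card x"
    using pair_card_swap[of x] by (metis pair_card_Pair)
  then show ?thesis
    using double_spread_face_proper[OF x] aff_dim_spread_face[OF ST(1)] ST(2)
    by (simp add: df_rank_def)
qed

lemma aff_dims_proper_faces_Pspread:
  "{aff_dim F | F. proper_face (Pspread :: (real ^ 'n::finite) set) F}
    = (\<lambda>x. int CARD('n) + 1 - int (pair_card x)) ` (disjoint_pairs :: ('n set \<times> 'n set) set)"
proof (intro equalityI subsetI)
  fix a assume "a \<in> {aff_dim F | F. proper_face (Pspread :: (real ^ 'n) set) F}"
  then obtain S T :: "'n set" where ST: "(S, T) \<in> disjoint_pairs" "a = aff_dim (spread_face S T)"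
    by (auto simp: proper_face_Pspread_iff)
  show "a \<in> (\<lambda>x. int CARD('n) + 1 - int (pair_card x)) ` (disjoint_pairs :: ('n set \<times> 'n set) set)"
    by (rule image_eqI[of _ _ "(S, T)"]) (use ST in \<open>simp_all add: aff_dim_spread_face\<close>)
next
  fix a assume "a \<in> (\<lambda>x. int CARD('n) + 1 - int (pair_card x)) ` (disjoint_pairs :: ('n set \<times> 'n set) set)"
  then obtain S T :: "'n set" where "(S, T) \<in> disjoint_pairs" "a = int CARD('n) + 1 - int (card S + card T)"
    by auto
  then have "proper_face Pspread (spread_face S T)" "a = aff_dim (spread_face S T)"
    by (simp_all add: proper_face_spread_face aff_dim_spread_face)
  then show "a \<in> {aff_dim F | F. proper_face (Pspread :: (real ^ 'n) set) F}" by blast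
qed

lemma df_rank_empty_Pspread:
  assumes "2 \<le> CARD('n::finite)"
  shows "df_rank (Pspread :: (real ^ 'n) set) {} = 0"
proof -
  have "Min ((\<lambda>x. int CARD('n) + 1 - int (pair_card x)) ` (disjoint_pairs :: ('n set \<times> 'n set) set)) = 1"
  proof (rule Min_eqI)
    obtain x :: "'n set \<times> 'n set" where x: "x \<in> disjoint_pairs" "pair_card x = CARD('n)"
      using exists_pair_card[OF assms order_refl] by blast
    show "1 \<in> (\<lambda>x. int CARD('n) + 1 - int (pair_card x)) ` (disjoint_pairs :: ('n set \<times> 'n set) set)"
      by (rule image_eqI[of _ _ x]) (use x in simp_all)
  next
    fix a assume "a \<in> (\<lambda>x. int CARD('n) + 1 - int (pair_card x)) ` (disjoint_pairs :: ('n set \<times> 'n set) set)"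
    then obtain x :: "'n set \<times> 'n set" where "x \<in> disjoint_pairs" "a = int CARD('n) + 1 - int (pair_card x)"
      by blast
    then show "1 \<le> a" using pair_card_le_CARD[of x] by simp
  qed simp
  moreover have "({} :: (real ^ 'n) set) \<noteq> Pspread" using zero_mem_Pspread by blast
  ultimately show ?thesis by (simp add: df_rank_def aff_dims_proper_faces_Pspread)
qed

lemma df_lattice_Pspread_subset: "X \<in> df_lattice Pspread \<Longrightarrow> X \<subseteq> Pspread"
  using double_spread_face_proper(1) by (auto simp: df_lattice_Pspread)

lemma df_rank_Pspread: "df_rank (Pspread :: (real ^ 'n::finite) set) Pspread = int CARD('n)"
  by (simp add: df_rank_def)

lemma pair_card_less_of_double_spread_face_psubset:
  assumes x: "x \<in> disjoint_pairs" and y: "y \<in> disjoint_pairs"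
    and "double_spread_face x \<subset> double_spread_face y"
  shows "pair_card y < pair_card x"
proof -
  have "y \<le> x \<or> prod.swap y \<le> x"
    using double_spread_face_subset_iff[OF x y] assms(3) by auto
  then obtain z where z: "z \<le> x" "z = y \<or> z = prod.swap y" by blast
  then have "z \<noteq> x" using assms(3) double_spread_face_swap[of y] by auto
  then have "pair_card z < pair_card x" using pair_card_less z(1) by blast
  moreover have "pair_card z = pair_card y" using z(2) pair_card_swap[of y] by auto
  ultimately show ?thesis by simp
qed

lemma df_rank_less_Pspread:
  fixes X Y :: "(real ^ 'n::finite) set"
  assumes N: "2 \<le> CARD('n)" and X: "X \<in> df_lattice Pspread" and Y: "Y \<in> df_lattice Pspread"
    and "X \<subset> Y"
  shows "df_rank Pspread X < df_rank Pspread Y"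
proof -
  have "Y \<noteq> {}" "X \<noteq> Pspread" using \<open>X \<subset> Y\<close> df_lattice_Pspread_subset[OF Y] by auto
  then have "X = {} \<or> (\<exists>x\<in>disjoint_pairs. X = double_spread_face x)"
    "Y = Pspread \<or> (\<exists>y\<in>disjoint_pairs. Y = double_spread_face y)"
    using X Y by (auto simp: df_lattice_Pspread)
  then consider "X = {}" "Y = Pspread"
    | y where "X = {}" "y \<in> disjoint_pairs" "Y = double_spread_face y"
    | x where "x \<in> disjoint_pairs" "X = double_spread_face x" "Y = Pspread"
    | x y where "x \<in> disjoint_pairs" "X = double_spread_face x"
        "y \<in> disjoint_pairs" "Y = double_spread_face y"
    by blast
  then show ?thesis
  proof cases
    case 1
    then show ?thesis using N by (simp add: df_rank_empty_Pspread df_rank_Pspread)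
  next
    case (2 y)
    then show ?thesis using N pair_card_le_CARD[of y]
      by (simp add: df_rank_empty_Pspread df_rank_double_spread_face)
  next
    case (3 x)
    then show ?thesis using two_le_pair_card[of x]
      by (simp add: df_rank_Pspread df_rank_double_spread_face)
  next
    case (4 x y)
    then show ?thesis using pair_card_less_of_double_spread_face_psubset[of x y] \<open>X \<subset> Y\<close>
      by (simp add: df_rank_double_spread_face)
  qed
qed

lemma card_double_spread_face_preimage:
  fixes A :: "(real ^ 'n::finite) set set"
  assumes A: "A \<subseteq> double_spread_face ` disjoint_pairs"
  shows "card {x \<in> disjoint_pairs. double_spread_face x \<in> A} = 2 * card A"
proof -
  have fibre: "card {x \<in> disjoint_pairs. double_spread_face x = D} = 2" if "D \<in> A" for D
  proof -
    obtain x0 :: "'n set \<times> 'n set" where x0: "x0 \<in> disjoint_pairs" "D = double_spread_face x0"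
      using A \<open>D \<in> A\<close> by blast
    have "{x \<in> disjoint_pairs. double_spread_face x = D} = {x0, prod.swap x0}"
    proof (intro equalityI subsetI)
      fix x assume "x \<in> {x \<in> disjoint_pairs. double_spread_face x = D}"
      then show "x \<in> {x0, prod.swap x0}" using double_spread_face_eq_iff[OF x0(1), of x] x0(2) by auto
    next
      fix x assume "x \<in> {x0, prod.swap x0}"
      then have "x = x0 \<or> x = prod.swap x0" by blast
      then show "x \<in> {x \<in> disjoint_pairs. double_spread_face x = D}"
        using x0 swap_mem_disjoint_pairs[OF x0(1)] double_spread_face_swap[of x0] by (elim disjE) simp_all
    qed
    moreover have "x0 \<noteq> prod.swap x0" using x0(1) by (cases x0) auto
    ultimately show ?thesis by simp
  qed
  have "finite A" using A by (rule finite_subset) simp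
  have "{x \<in> disjoint_pairs. double_spread_face x \<in> A}
      = (\<Union>D\<in>A. {x \<in> disjoint_pairs. double_spread_face x = D})" by auto
  also have "card \<dots> = (\<Sum>D\<in>A. card {x \<in> disjoint_pairs. double_spread_face x = D})"
    by (rule card_UN_disjoint) (use \<open>finite A\<close> in auto)
  also have "\<dots> = (\<Sum>D\<in>A. 2)" by (rule sum.cong) (simp_all add: fibre)
  also have "\<dots> = 2 * card A" by simp
  finally show ?thesis .
qed

lemma is_antichain_double_spread_face_preimage:
  fixes A :: "(real ^ 'n::finite) set set"
  assumes "df_antichain Pspread A"
  shows "is_antichain (\<le>) {x \<in> disjoint_pairs. double_spread_face x \<in> A}"
  unfolding is_antichain_def
proof (intro ballI impI notI)
  fix x y assume x: "x \<in> {x \<in> disjoint_pairs. double_spread_face x \<in> A}"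
    and y: "y \<in> {x \<in> disjoint_pairs. double_spread_face x \<in> A}" and "x \<noteq> y" "x \<le> y"
  then have sub: "double_spread_face y \<subseteq> double_spread_face x"
    using double_spread_face_subset_iff[of y x] by auto
  show False
  proof (cases "double_spread_face x = double_spread_face y")
    case True
    then have "y = prod.swap x" using double_spread_face_eq_iff[of x y] x y \<open>x \<noteq> y\<close> by auto
    then show False using \<open>x \<le> y\<close> x by (cases x) auto
  next
    case False
    then show False using assms sub x y by (auto simp: df_antichain_def)
  qed
qed

lemma df_antichain_card_le_one:
  assumes A: "df_antichain Pspread A" and "Pspread \<in> A \<or> {} \<in> A"
  shows "card A \<le> 1"
proof -
  have incomparable: "\<not> X \<subseteq> Y" if "X \<in> A" "Y \<in> A" "X \<noteq> Y" for X Y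
    using A that by (simp add: df_antichain_def)
  have "A \<subseteq> {Pspread} \<or> A \<subseteq> {{}}"
  proof (cases "Pspread \<in> A")
    case True
    have "Y = Pspread" if "Y \<in> A" for Y
      using incomparable[OF that True] df_lattice_Pspread_subset[of Y] A that
      by (auto simp: df_antichain_def)
    then show ?thesis by blast
  next
    case False
    then have "{} \<in> A" using assms(2) by blast
    then have "Y = {}" if "Y \<in> A" for Y using incomparable[OF \<open>{} \<in> A\<close> that] by blast
    then show ?thesis by blast
  qed
  then show ?thesis by (auto dest: card_mono[rotated])
qed

lemma double_spread_face_preimage_level:
  "{x \<in> disjoint_pairs. double_spread_face x \<in> double_spread_face ` pairs.level j} = pairs.level j"
proof (intro equalityI subsetI)
  fix x assume "x \<in> {x \<in> disjoint_pairs. double_spread_face x \<in> double_spread_face ` pairs.level j}"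
  then obtain y where x: "x \<in> disjoint_pairs" and y: "y \<in> pairs.level j" "double_spread_face x = double_spread_face y"
    by blast
  then have "x = y \<or> x = prod.swap y"
    using double_spread_face_eq_iff[of y x] by (simp add: pairs.level_def)
  then have "pair_card x = pair_card y" using pair_card_swap[of y] by auto
  then show "x \<in> pairs.level j" using x y by (simp add: pairs.level_def)
qed (auto simp: pairs.level_def)

lemma df_antichain_card_le_Pspread:
  fixes A :: "(real ^ 'n::finite) set set"
  assumes N: "2 \<le> CARD('n)" and A: "df_antichain Pspread A"
  shows "card A \<le> card (double_spread_face ` (pairs.level (int (CARD('n) - CARD('n) div 3)) :: ('n set \<times> 'n set) set))"
    (is "_ \<le> card (double_spread_face ` ?V)")
proof (cases "Pspread \<in> A \<or> {} \<in> A")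
  case True
  have "2 \<le> CARD('n) - CARD('n) div 3" using N by linarith
  then obtain x :: "'n set \<times> 'n set" where "x \<in> disjoint_pairs" "pair_card x = CARD('n) - CARD('n) div 3"
    using exists_pair_card[where 'n = 'n] diff_le_self by blast
  then have "x \<in> ?V" by (simp add: pairs.level_def)
  then have "1 \<le> card (double_spread_face ` ?V)" by (auto simp: Suc_le_eq card_gt_0_iff)
  then show ?thesis using df_antichain_card_le_one[OF A True] by linarith
next
  case False
  then have A_sub: "A \<subseteq> double_spread_face ` disjoint_pairs"
    using A by (auto simp: df_antichain_def df_lattice_Pspread)
  have "2 * card A \<le> card ?V"
    using disjoint_pairs_antichain_card_le[OF N _ is_antichain_double_spread_face_preimage[OF A]]
      card_double_spread_face_preimage[OF A_sub] by simp
  also have "\<dots> = 2 * card (double_spread_face ` ?V)"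
  proof -
    have "?V \<subseteq> disjoint_pairs" by (auto simp: pairs.level_def)
    from card_double_spread_face_preimage[OF image_mono[OF this]] show ?thesis
      unfolding double_spread_face_preimage_level .
  qed
  finally show ?thesis by linarith
qed

lemma df_antichain_rank_level:
  assumes "\<And>X Y. X \<in> df_lattice Q \<Longrightarrow> Y \<in> df_lattice Q \<Longrightarrow> X \<subset> Y \<Longrightarrow> df_rank Q X < df_rank Q Y"
  shows "df_antichain Q (rank_level Q k)"
  unfolding df_antichain_def rank_level_def
proof (intro conjI ballI impI notI)
  fix X Y assume "X \<in> {D \<in> df_lattice Q. df_rank Q D = k}" "Y \<in> {D \<in> df_lattice Q. df_rank Q D = k}"
    "X \<noteq> Y" "X \<subseteq> Y"
  then show False using assms[of X Y] by auto
qed auto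

lemma df_sperner_of_level_bound:
  assumes finite: "finite (df_lattice Q)"
    and rank_less: "\<And>X Y. X \<in> df_lattice Q \<Longrightarrow> Y \<in> df_lattice Q \<Longrightarrow> X \<subset> Y \<Longrightarrow> df_rank Q X < df_rank Q Y"
    and k: "k \<in> df_rank Q ` df_lattice Q"
    and bound: "\<And>A. df_antichain Q A \<Longrightarrow> card A \<le> card (rank_level Q k)"
  shows "Max (card ` {A. df_antichain Q A}) = card (rank_level Q k)"
    and "Max ((\<lambda>k. card (rank_level Q k)) ` df_rank Q ` df_lattice Q) = card (rank_level Q k)"
proof -
  have "finite {A. df_antichain Q A}"
    using finite by (rule rev_finite_subset[OF finite_Pow_iff[THEN iffD2]]) (auto simp: df_antichain_def)
  then show "Max (card ` {A. df_antichain Q A}) = card (rank_level Q k)"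
    using bound df_antichain_rank_level[OF rank_less, of k] by (intro Max_eqI) auto
  show "Max ((\<lambda>k. card (rank_level Q k)) ` df_rank Q ` df_lattice Q) = card (rank_level Q k)"
    using finite k bound df_antichain_rank_level[OF rank_less] by (intro Max_eqI) auto
qed

lemma double_faces_of_dim_Pspread:
  "double_faces_of_dim (Pspread :: (real ^ 'n::finite) set) (int CARD('n) + 1 - int j)
    = double_spread_face ` (pairs.level (int j) :: ('n set \<times> 'n set) set)"
proof (intro equalityI subsetI)
  fix D assume "D \<in> double_faces_of_dim (Pspread :: (real ^ 'n) set) (int CARD('n) + 1 - int j)"
  then obtain S T :: "'n set" where ST: "(S, T) \<in> disjoint_pairs"
    "aff_dim (spread_face S T) = int CARD('n) + 1 - int j"
    "D = spread_face S T \<union> uminus ` spread_face S T"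
    by (auto simp: double_faces_of_dim_def proper_face_Pspread_iff)
  then have "(S, T) \<in> pairs.level (int j)" by (simp add: aff_dim_spread_face pairs.level_def)
  moreover have "D = double_spread_face (S, T)"
    using ST(3) by (simp add: double_spread_face_def uminus_spread_face)
  ultimately show "D \<in> double_spread_face ` pairs.level (int j)" by blast
next
  fix D assume "D \<in> double_spread_face ` (pairs.level (int j) :: ('n set \<times> 'n set) set)"
  then obtain S T :: "'n set" where ST: "(S, T) \<in> disjoint_pairs" "card S + card T = j"
    "D = double_spread_face (S, T)"
    by (auto simp: pairs.level_def)
  then show "D \<in> double_faces_of_dim Pspread (int CARD('n) + 1 - int j)"
    unfolding double_faces_of_dim_def
    by (intro CollectI exI[of _ "spread_face S T"])
      (simp add: proper_face_spread_face aff_dim_spread_face double_spread_face_def uminus_spread_face)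
qed

lemma rank_level_Pspread:
  assumes "2 \<le> j" "j \<le> CARD('n::finite)"
  shows "rank_level (Pspread :: (real ^ 'n) set) (int CARD('n) + 1 - int j)
    = double_spread_face ` (pairs.level (int j) :: ('n set \<times> 'n set) set)"
proof (intro equalityI subsetI)
  fix D assume D: "D \<in> rank_level (Pspread :: (real ^ 'n) set) (int CARD('n) + 1 - int j)"
  have "2 \<le> CARD('n)" using assms by linarith
  with D assms have "D \<noteq> Pspread" "D \<noteq> {}"
    by (auto simp: rank_level_def df_rank_Pspread df_rank_empty_Pspread)
  with D obtain x where x: "x \<in> disjoint_pairs" "D = double_spread_face x"
    by (auto simp: rank_level_def df_lattice_Pspread)
  then have "pair_card x = j" using D by (auto simp: rank_level_def df_rank_double_spread_face)
  then show "D \<in> double_spread_face ` pairs.level (int j)"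
    using x by (auto simp: pairs.level_def)
next
  fix D assume "D \<in> double_spread_face ` (pairs.level (int j) :: ('n set \<times> 'n set) set)"
  then obtain x where "x \<in> disjoint_pairs" "pair_card x = j" "D = double_spread_face x"
    by (auto simp: pairs.level_def)
  then show "D \<in> rank_level Pspread (int CARD('n) + 1 - int j)"
    by (auto simp: rank_level_def df_lattice_Pspread df_rank_double_spread_face)
qed

lemma middle_rank_level_Pspread:
  assumes N: "2 \<le> CARD('n::finite)"
  defines "d \<equiv> int (CARD('n) div 3) + 1"
  shows "rank_level (Pspread :: (real ^ 'n) set) d = double_faces_of_dim Pspread d"
    and "d \<in> df_rank (Pspread :: (real ^ 'n) set) ` df_lattice Pspread"
    and "df_antichain (Pspread :: (real ^ 'n) set) A \<Longrightarrow> card A \<le> card (rank_level (Pspread :: (real ^ 'n) set) d)"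
proof -
  define m where "m = CARD('n) - CARD('n) div 3"
  have d: "d = int CARD('n) + 1 - int m" by (simp add: d_def m_def)
  have m: "2 \<le> m" "m \<le> CARD('n)" using N by (simp_all add: m_def)
  note level = rank_level_Pspread[OF m, folded d]
  show "rank_level (Pspread :: (real ^ 'n) set) d = double_faces_of_dim Pspread d"
    using level double_faces_of_dim_Pspread[where 'n = 'n, of m] by (simp add: d)
  obtain x :: "'n set \<times> 'n set" where "x \<in> disjoint_pairs" "pair_card x = m"
    using exists_pair_card[OF m] by blast
  then have "double_spread_face x \<in> rank_level (Pspread :: (real ^ 'n) set) d"
    using level by (auto simp: pairs.level_def)
  then show "d \<in> df_rank (Pspread :: (real ^ 'n) set) ` df_lattice Pspread"
    unfolding rank_level_def by blast
  show "card A \<le> card (rank_level (Pspread :: (real ^ 'n) set) d)" if "df_antichain (Pspread :: (real ^ 'n) set) A"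
    using df_antichain_card_le_Pspread[OF N that] level by (simp add: m_def)
qed

theorem theorem3:
  assumes "CARD('n) \<ge> 2"
  shows "finite (df_lattice (Pspread :: (real ^ 'n) set))
    \<and> Max (card ` {A. df_antichain (Pspread :: (real ^ 'n) set) A})
        = Max ((\<lambda>k. card (rank_level (Pspread :: (real ^ 'n) set) k))
                 ` df_rank (Pspread :: (real ^ 'n) set) ` df_lattice (Pspread :: (real ^ 'n) set))
    \<and> df_antichain (Pspread :: (real ^ 'n) set)
        (double_faces_of_dim (Pspread :: (real ^ 'n) set) (int (CARD('n) div 3) + 1))
    \<and> card (double_faces_of_dim (Pspread :: (real ^ 'n) set) (int (CARD('n) div 3) + 1))
        = Max (card ` {A. df_antichain (Pspread :: (real ^ 'n) set) A})"
proof -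
  let ?P = "Pspread :: (real ^ 'n) set"
  have finite: "finite (df_lattice ?P)" by (simp add: df_lattice_Pspread)
  have rank_less: "\<And>X Y. X \<in> df_lattice ?P \<Longrightarrow> Y \<in> df_lattice ?P \<Longrightarrow> X \<subset> Y \<Longrightarrow> df_rank ?P X < df_rank ?P Y"
    using df_rank_less_Pspread[OF assms] by blast
  note middle = middle_rank_level_Pspread[OF assms]
  show ?thesis
    unfolding middle(1)[symmetric]
    using df_sperner_of_level_bound[OF finite rank_less middle(2,3)]
      df_antichain_rank_level[OF rank_less] finite by simp
qed

end
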